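(* Let $n\ge 2$ and let $v_1<\cdots<v_{n-1}$ be positive integers with $\mathrm{ML}(v_1,\ldots,v_{n-1})=L$. Let $t_1,\ldots,t_r$ be the (finitely many) times $t\in[0,1)$ at which $\Vert t v_i\Vert\ge L$ for all $1\le i\le n-1$. For each $j$, let $\rho_j$ be the largest index $i$ such that $t_j v_i$ has fractional part $L$, and let $\lambda_j$ be the largest index $i$ such that $t_j v_i$ has fractional part $1-L$. Define $\mu=\min_{1\le j\le r}\min\{\rho_j,\lambda_j\}$, and let $D$ be the least common multiple of the denominators of the $t_j$ written as reduced fractions. Then there is a constant $C$ (depending on $v_1,\ldots,v_{n-1}$) such that for every integer $v_n\ge C$ that is a multiple of $D$, $$\mathrm{ML}(v_1,\ldots,v_n)=\frac{v_n L}{v_n+v_\mu}.$$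
   Context: For a real number $x$, $\Vert x\Vert$ denotes the distance from $x$ to the nearest integer. For positive integers $v_1,\ldots,v_k$, the maximum loneliness is $\mathrm{ML}(v_1,\ldots,v_k)=\max_{t\in\mathbb{R}}\min_{1\le i\le k}\Vert t v_i\Vert$. *)

theory Defs
  imports Complex_Main
begin

definition dist_int :: "real \<Rightarrow> real" where
  "dist_int x = \<bar>x - of_int (round x)\<bar>"

definition max_lonely :: "(nat \<Rightarrow> nat) \<Rightarrow> nat \<Rightarrow> real" where
  "max_lonely v k = (SUP t::real. Min ((\<lambda>i. dist_int (t * real (v i))) ` {1..k}))"

definition lonely_times :: "(nat \<Rightarrow> nat) \<Rightarrow> nat \<Rightarrow> real \<Rightarrow> real set" where
  "lonely_times v k L = {t. 0 \<le> t \<and> t < 1 \<and> (\<forall>i\<in>{1..k}. dist_int (t * real (v i)) \<ge> L)}"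

definition rho_idx :: "(nat \<Rightarrow> nat) \<Rightarrow> nat \<Rightarrow> real \<Rightarrow> real \<Rightarrow> nat" where
  "rho_idx v k L t = Max {i\<in>{1..k}. frac (t * real (v i)) = L}"

definition lambda_idx :: "(nat \<Rightarrow> nat) \<Rightarrow> nat \<Rightarrow> real \<Rightarrow> real \<Rightarrow> nat" where
  "lambda_idx v k L t = Max {i\<in>{1..k}. frac (t * real (v i)) = 1 - L}"

definition mu_idx :: "(nat \<Rightarrow> nat) \<Rightarrow> nat \<Rightarrow> real \<Rightarrow> nat" where
  "mu_idx v k L = Min ((\<lambda>t. min (rho_idx v k L t) (lambda_idx v k L t)) ` lonely_times v k L)"

definition real_denom :: "real \<Rightarrow> int" where
  "real_denom t = snd (quotient_of (THE q. t = of_rat q))"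

definition times_lcm :: "(nat \<Rightarrow> nat) \<Rightarrow> nat \<Rightarrow> real \<Rightarrow> int" where
  "times_lcm v k L = Lcm (real_denom ` lonely_times v k L)"

end

theory Submission
  imports Defs "HOL-Analysis.Analysis"
begin

text \<open>Write \<open>f(t) = min\<^sub>i \<parallel>t v\<^sub>i\<parallel>\<close> for the loneliness of the first \<open>k = n - 1\<close> runners, so
  \<open>L = max f\<close>. At a maximiser \<open>t\<close> some runner has fractional part exactly \<open>L\<close> and another
  exactly \<open>1 - L\<close>, so \<open>t (v\<^sub>a + v\<^sub>b) \<in> \<int>\<close>: the lonely times are finitely many rationals,
  and if \<open>D\<close> divides \<open>w\<close> the new runner of speed \<open>w\<close> is at an integer at each of them.
  Away from the lonely times \<open>f \<le> L - \<eta>\<close>. At distance \<open>\<sigma>\<close> from a lonely time the old runners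
  give at most \<open>L - |\<sigma>| v\<^sub>\<mu>\<close> and the new one at most \<open>|\<sigma>| w\<close>, so for large \<open>w\<close> the extended
  loneliness is at most the crossing value \<open>w L / (w + v\<^sub>\<mu>)\<close>; it is attained at distance
  \<open>L / (w + v\<^sub>\<mu>)\<close> after a lonely time (or its reflection) at which \<open>v\<^sub>\<mu>\<close> is the fastest
  runner with fractional part \<open>1 - L\<close>.\<close>

lemma dist_int_frac: "dist_int x = min (frac x) (1 - frac x)"
  unfolding dist_int_def round_altdef frac_def
  by (cases "x \<in> \<int>") (auto simp: ceiling_altdef split: if_splits)

lemma dist_int_le_abs_diff: "dist_int x \<le> \<bar>x - of_int m\<bar>"
proof -
  have "m \<le> \<lfloor>x\<rfloor> \<or> \<lfloor>x\<rfloor> + 1 \<le> m" by linarith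
  then show ?thesis
    unfolding dist_int_frac frac_def
    by (smt (verit) floor_le_iff le_floor_iff of_int_le_iff of_int_add of_int_1 floor_less_iff)
qed

lemma dist_int_le_add_abs_diff: "dist_int x \<le> dist_int y + \<bar>x - y\<bar>"
  using dist_int_le_abs_diff[of x "round y"] unfolding dist_int_def by linarith

lemma dist_int_add_of_int [simp]: "dist_int (x + of_int m) = dist_int x"
  unfolding dist_int_frac by simp

lemma dist_int_uminus [simp]: "dist_int (- x) = dist_int x"
  unfolding dist_int_frac frac_neg by (auto simp: min_def dest: frac_eq_0_iff[THEN iffD2])

lemma dist_int_le_half: "dist_int x \<le> 1/2"
  unfolding dist_int_frac min_def by auto

lemma dist_int_ge_iff: "c \<le> dist_int x \<longleftrightarrow> c \<le> frac x \<and> frac x \<le> 1 - c"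
  unfolding dist_int_frac by auto

lemma dist_int_eq_self: "0 \<le> x \<Longrightarrow> x \<le> 1/2 \<Longrightarrow> dist_int x = x"
  unfolding dist_int_frac by (cases "x < 1") (auto simp: frac_eq)

lemma frac_add_small:
  assumes "0 \<le> b" "frac a + b < 1"
  shows "frac (a + b) = frac a + b"
proof -
  have "b < 1" using assms frac_ge_0[of a] by linarith
  then have "frac b = b" using assms by (simp add: frac_eq)
  then show ?thesis using assms frac_add[of a b] by simp
qed

lemma frac_diff_small:
  assumes "0 \<le> b" "b \<le> frac a"
  shows "frac (a - b) = frac a - b"
proof -
  have "frac (frac a - b) = frac a - b" using assms frac_lt_1[of a] by (simp add: frac_eq)
  moreover have "a - b = (frac a - b) + of_int \<lfloor>a\<rfloor>" unfolding frac_def by simp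
  ultimately show ?thesis by (metis frac_add_of_int_right)
qed

lemma dist_int_add_of_frac_eq_1_minus:
  assumes "frac a = 1 - c" "0 \<le> b" "b < c" "c \<le> 1/2"
  shows "dist_int (a + b) = c - b"
  using assms frac_add_small[of b a] unfolding dist_int_frac by auto

lemma dist_int_diff_of_frac_eq:
  assumes "frac a = c" "0 \<le> b" "b < c" "c \<le> 1/2"
  shows "dist_int (a - b) = c - b"
  using assms frac_diff_small[of b a] unfolding dist_int_frac by auto

lemma min_le_crossing:
  fixes a c V w :: real
  assumes "0 < V" "0 < w"
  shows "min (c - a * V) (a * w) \<le> w * c / (w + V)"
proof (cases "a * (w + V) \<le> c")
  case True
  then have "a * (w + V) * w \<le> c * w"
    using assms by (intro mult_right_mono) auto
  then have "a * w * (w + V) \<le> w * c" by (simp add: algebra_simps)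
  then have "a * w \<le> w * c / (w + V)" using assms by (simp add: pos_le_divide_eq)
  then show ?thesis by linarith
next
  case False
  then have "c * V \<le> a * (w + V) * V"
    using assms by (intro mult_right_mono) auto
  then have "(c - a * V) * (w + V) \<le> w * c" by (simp add: algebra_simps)
  then have "c - a * V \<le> w * c / (w + V)" using assms by (simp add: pos_le_divide_eq)
  then show ?thesis by linarith
qed

definition loneliness :: "(nat \<Rightarrow> nat) \<Rightarrow> nat \<Rightarrow> real \<Rightarrow> real" where
  "loneliness v k t = Min ((\<lambda>i. dist_int (t * real (v i))) ` {1..k})"

lemma max_lonely_eq_SUP_loneliness: "max_lonely v k = (SUP t. loneliness v k t)"
  unfolding max_lonely_def loneliness_def ..

lemma loneliness_le: "i \<in> {1..k} \<Longrightarrow> loneliness v k t \<le> dist_int (t * real (v i))"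
  unfolding loneliness_def by (rule Min_le) auto

lemma loneliness_ge_iff:
  "1 \<le> k \<Longrightarrow> c \<le> loneliness v k t \<longleftrightarrow> (\<forall>i\<in>{1..k}. c \<le> dist_int (t * real (v i)))"
  unfolding loneliness_def by (subst Min_ge_iff) auto

lemma loneliness_gt_iff:
  "1 \<le> k \<Longrightarrow> c < loneliness v k t \<longleftrightarrow> (\<forall>i\<in>{1..k}. c < dist_int (t * real (v i)))"
  unfolding loneliness_def by (subst Min_gr_iff) auto

lemma loneliness_attained:
  assumes "1 \<le> k"
  shows "\<exists>i\<in>{1..k}. loneliness v k t = dist_int (t * real (v i))"
proof -
  have "loneliness v k t \<in> (\<lambda>i. dist_int (t * real (v i))) ` {1..k}"
    unfolding loneliness_def using assms by (intro Min_in) auto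
  then show ?thesis by auto
qed

lemma loneliness_le_half: "1 \<le> k \<Longrightarrow> loneliness v k t \<le> 1/2"
  by (rule order_trans[OF loneliness_le dist_int_le_half]) auto

lemma loneliness_add_of_int: "loneliness v k (t + of_int m) = loneliness v k t"
proof -
  have "dist_int ((t + of_int m) * real (v i)) = dist_int (t * real (v i))" for i
    using dist_int_add_of_int[of "t * real (v i)" "m * int (v i)"] by (simp add: algebra_simps)
  then show ?thesis unfolding loneliness_def by simp
qed

lemma loneliness_frac: "loneliness v k (frac t) = loneliness v k t"
  using loneliness_add_of_int[of v k "frac t" "\<lfloor>t\<rfloor>"] by (simp add: frac_def)

lemma loneliness_uminus: "loneliness v k (- t) = loneliness v k t"
  unfolding loneliness_def by simp

lemma loneliness_lipschitz:
  assumes "1 \<le> k"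
  shows "loneliness v k t \<le> loneliness v k t' + real (\<Sum>i\<in>{1..k}. v i) * \<bar>t - t'\<bar>"
proof -
  obtain j where j: "j \<in> {1..k}" "loneliness v k t' = dist_int (t' * real (v j))"
    using loneliness_attained[OF assms] by blast
  have "real (v j) \<le> real (\<Sum>i\<in>{1..k}. v i)"
    using j(1) by (simp add: member_le_sum del: of_nat_sum)
  then have "real (v j) * \<bar>t - t'\<bar> \<le> real (\<Sum>i\<in>{1..k}. v i) * \<bar>t - t'\<bar>"
    by (rule mult_right_mono) simp
  moreover have "loneliness v k t \<le> dist_int (t' * real (v j)) + real (v j) * \<bar>t - t'\<bar>"
    using loneliness_le[OF j(1), of v t] dist_int_le_add_abs_diff[of "t * real (v j)" "t' * real (v j)"]
    by (simp add: abs_mult left_diff_distrib[symmetric] mult.commute)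
  ultimately show ?thesis using j(2) by linarith
qed

lemma continuous_on_loneliness:
  assumes "1 \<le> k"
  shows "continuous_on S (loneliness v k)"
proof (rule lipschitz_on_continuous_on, rule lipschitz_onI)
  fix x y
  show "dist (loneliness v k x) (loneliness v k y) \<le> real (\<Sum>i\<in>{1..k}. v i) * dist x y"
    using loneliness_lipschitz[OF assms, of v x y] loneliness_lipschitz[OF assms, of v y x]
    by (simp add: dist_real_def abs_minus_commute)
qed (simp add: sum_nonneg)

lemma loneliness_fun_upd_Suc:
  assumes "1 \<le> k"
  shows "loneliness (v(Suc k := w)) (Suc k) t = min (loneliness v k t) (dist_int (t * real w))"
proof -
  have "(\<lambda>i. dist_int (t * real ((v(Suc k := w)) i))) ` {1..k} = (\<lambda>i. dist_int (t * real (v i))) ` {1..k}"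
    by (intro image_cong) auto
  moreover have "{1..Suc k} = insert (Suc k) {1..k}" by auto
  ultimately show ?thesis
    unfolding loneliness_def using assms by (simp add: min.commute)
qed

lemma mult_Ints_of_real_denom_dvd:
  assumes "real_denom (of_rat q) dvd m"
  shows "(of_rat q :: real) * of_int m \<in> \<int>"
proof -
  obtain p d where pd: "quotient_of q = (p, d)" by (cases "quotient_of q")
  have the_q: "(THE q'. (of_rat q :: real) = of_rat q') = q"
    by (rule the_equality) auto
  have "real_denom (of_rat q) = d" unfolding real_denom_def the_q pd by simp
  then obtain e where m: "m = d * e" using assms by blast
  have "0 < d" using quotient_of_denom_pos[OF pd] .
  moreover have "(of_rat q :: real) = of_int p / of_int d"
    using quotient_of_div[OF pd] by (simp add: of_rat_divide)
  ultimately have "of_rat q * of_int m = (of_int (p * e) :: real)" unfolding m by simp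
  then show ?thesis by (metis Ints_of_int)
qed

lemma tendsto_mult_right_at_right_0: "((\<lambda>s. s * w) \<longlongrightarrow> 0) (at_right (0::real))"
  by (auto intro!: tendsto_eq_intros)

lemma eventually_dist_int_diff_gt:
  assumes "0 \<le> c" "c < frac a" "frac a \<le> 1 - c" "0 < w"
  shows "\<forall>\<^sub>F s in at_right 0. c < dist_int (a - s * w)"
proof -
  have "\<forall>\<^sub>F s in at_right 0. s * w < frac a - c"
    using assms by (intro order_tendstoD(2)[OF tendsto_mult_right_at_right_0]) simp
  with eventually_at_right_less show ?thesis
  proof eventually_elim
    case (elim s)
    then have "0 < s * w" using assms by simp
    then have "frac (a - s * w) = frac a - s * w"
      using elim assms by (intro frac_diff_small) auto
    moreover have "c < frac a - s * w" "c < 1 - (frac a - s * w)"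
      using elim assms \<open>0 < s * w\<close> by linarith+
    ultimately show ?case unfolding dist_int_frac by simp
  qed
qed

lemma eventually_dist_int_add_ge:
  assumes "c \<le> dist_int a" "0 < c" "c \<le> 1/2" "0 \<le> w" "0 \<le> V" "frac a = 1 - c \<Longrightarrow> w \<le> V"
  shows "\<forall>\<^sub>F s in at_right 0. c - s * V \<le> dist_int (a + s * w)"
proof (cases "frac a = 1 - c")
  case True
  have "\<forall>\<^sub>F s in at_right 0. s * w < c"
    using assms by (intro order_tendstoD(2)[OF tendsto_mult_right_at_right_0])
  with eventually_at_right_less show ?thesis
  proof eventually_elim
    case (elim s)
    then have "s * w \<le> s * V" using True assms by (intro mult_left_mono) auto
    moreover have "dist_int (a + s * w) = c - s * w"
      using elim True assms by (intro dist_int_add_of_frac_eq_1_minus) auto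
    ultimately show ?case by simp
  qed
next
  case False
  then have "frac a < 1 - c" using assms(1) dist_int_ge_iff by auto
  then have "\<forall>\<^sub>F s in at_right 0. s * w < 1 - c - frac a"
    by (intro order_tendstoD(2)[OF tendsto_mult_right_at_right_0]) simp
  with eventually_at_right_less show ?thesis
  proof eventually_elim
    case (elim s)
    have "0 \<le> s * w" "0 \<le> s * V" using elim assms by simp_all
    then have "frac (a + s * w) = frac a + s * w"
      using elim assms by (intro frac_add_small) auto
    moreover have "c \<le> frac a + s * w" "frac a + s * w \<le> 1 - c"
      using elim assms(1)[unfolded dist_int_ge_iff] \<open>0 \<le> s * w\<close> by linarith+
    ultimately have "c \<le> dist_int (a + s * w)" by (simp add: dist_int_ge_iff)
    then show ?case using \<open>0 \<le> s * V\<close> by linarith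
  qed
qed

lemma filterlim_divide_add_at_right_0:
  fixes c V :: real
  assumes "0 < c" "0 < V"
  shows "filterlim (\<lambda>w. c / (real w + V)) (at_right 0) sequentially"
proof (rule tendsto_imp_filterlim_at_right)
  show "((\<lambda>w. c / (real w + V)) \<longlongrightarrow> 0) sequentially"
    by (rule tendsto_divide_0[OF tendsto_const tendsto_add_filterlim_at_infinity'[OF
          filterlim_at_top_imp_at_infinity[OF filterlim_real_sequentially] tendsto_const]])
  show "\<forall>\<^sub>F w in sequentially. 0 < c / (real w + V)"
    using assms by (intro always_eventually allI) simp
qed

lemma mult_divide_add_eq_diff:
  fixes c V w :: real
  assumes "0 < V" "0 \<le> w"
  shows "w * c / (w + V) = c - c / (w + V) * V"
  using assms by (simp add: field_simps)

lemma rho_idx_ge: "i \<in> {1..k} \<Longrightarrow> frac (t * real (v i)) = L \<Longrightarrow> i \<le> rho_idx v k L t"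
  unfolding rho_idx_def by (rule Max_ge) auto

lemma lambda_idx_ge: "i \<in> {1..k} \<Longrightarrow> frac (t * real (v i)) = 1 - L \<Longrightarrow> i \<le> lambda_idx v k L t"
  unfolding lambda_idx_def by (rule Max_ge) auto

locale lonely_speeds =
  fixes v :: "nat \<Rightarrow> nat" and k :: nat and L :: real
  assumes k_ge_1: "1 \<le> k"
    and speeds_pos: "\<And>i. i \<in> {1..k} \<Longrightarrow> 0 < v i"
    and max_lonely_eq: "max_lonely v k = L"
begin

lemma loneliness_le_L: "loneliness v k t \<le> L"
proof -
  have "bdd_above (range (loneliness v k))"
    using loneliness_le_half[OF k_ge_1] by (intro bdd_aboveI2)
  then show ?thesis
    unfolding max_lonely_eq[symmetric] max_lonely_eq_SUP_loneliness by (rule cSUP_upper[OF UNIV_I])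
qed

lemma loneliness_attains_L: "\<exists>t. loneliness v k t = L"
proof -
  obtain x where "x \<in> {0..1}"
    and x_max: "\<And>y. y \<in> {0..1} \<Longrightarrow> loneliness v k y \<le> loneliness v k x"
    using continuous_attains_sup[of "{0..1}" "loneliness v k"] continuous_on_loneliness[OF k_ge_1]
    by fastforce
  have "loneliness v k t \<le> loneliness v k x" for t
    using x_max[of "frac t"] frac_ge_0[of t] frac_lt_1[of t] by (simp add: loneliness_frac)
  then have "(SUP t. loneliness v k t) = loneliness v k x"
    by (intro cSup_eq_maximum) auto
  then show ?thesis using max_lonely_eq max_lonely_eq_SUP_loneliness by metis
qed

lemma L_le_half: "L \<le> 1/2"
  using loneliness_attains_L loneliness_le_half[OF k_ge_1] by metis

lemma L_pos: "0 < L"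
proof -
  define u where "u = real (Max (v ` {1..k}))"
  have u: "real (v i) \<le> u" "0 < u" if "i \<in> {1..k}" for i
  proof -
    have "v i \<le> Max (v ` {1..k})" using that by (intro Max_ge) auto
    then show "real (v i) \<le> u" "0 < u" using speeds_pos[OF that] by (auto simp: u_def)
  qed
  have "0 < loneliness v k (1 / (2 * u))"
    unfolding loneliness_gt_iff[OF k_ge_1]
  proof
    fix i assume i: "i \<in> {1..k}"
    have "0 < 1 / (2 * u) * real (v i)" using u[OF i] speeds_pos[OF i] by simp
    moreover have "1 / (2 * u) * real (v i) \<le> 1/2" using u[OF i] by (simp add: field_simps)
    ultimately show "0 < dist_int (1 / (2 * u) * real (v i))" by (simp add: dist_int_eq_self)
  qed
  then show ?thesis using loneliness_le_L by (meson less_le_trans)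
qed

lemma mem_lonely_times_iff:
  "t \<in> lonely_times v k L \<longleftrightarrow> 0 \<le> t \<and> t < 1 \<and> L \<le> loneliness v k t"
  unfolding lonely_times_def loneliness_ge_iff[OF k_ge_1] by auto

lemma frac_mem_lonely_times: "L \<le> loneliness v k t \<Longrightarrow> frac t \<in> lonely_times v k L"
  by (simp add: mem_lonely_times_iff loneliness_frac frac_lt_1)

lemma lonely_times_nonempty: "lonely_times v k L \<noteq> {}"
  using loneliness_attains_L frac_mem_lonely_times by (metis empty_iff order_refl)

lemma frac_bounds_if_lonely:
  assumes "L \<le> loneliness v k t" "i \<in> {1..k}"
  shows "L \<le> frac (t * real (v i))" "frac (t * real (v i)) \<le> 1 - L"
  using assms loneliness_ge_iff[OF k_ge_1] dist_int_ge_iff by blast+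

text \<open>Otherwise moving slightly back in time would increase the loneliness.\<close>

lemma exists_frac_eq_L:
  assumes "L \<le> loneliness v k t"
  shows "\<exists>i\<in>{1..k}. frac (t * real (v i)) = L"
proof (rule ccontr)
  assume "\<not> ?thesis"
  then have "\<forall>i\<in>{1..k}. L < frac (t * real (v i)) \<and> frac (t * real (v i)) \<le> 1 - L"
    using frac_bounds_if_lonely[OF assms] by force
  then have "\<forall>\<^sub>F s in at_right 0. \<forall>i\<in>{1..k}. L < dist_int (t * real (v i) - s * real (v i))"
    using speeds_pos L_pos by (intro eventually_ball_finite ballI eventually_dist_int_diff_gt) auto
  then obtain s where s: "\<forall>i\<in>{1..k}. L < dist_int (t * real (v i) - s * real (v i))"
    using eventually_happens'[OF trivial_limit_at_right_real] by blast
  have "L < loneliness v k (t - s)"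
    unfolding loneliness_gt_iff[OF k_ge_1] using s by (simp add: left_diff_distrib)
  then show False using loneliness_le_L[of "t - s"] by linarith
qed

lemma exists_frac_eq_1_minus_L:
  assumes "L \<le> loneliness v k t"
  shows "\<exists>i\<in>{1..k}. frac (t * real (v i)) = 1 - L"
proof -
  obtain i where i: "i \<in> {1..k}" "frac (- (t * real (v i))) = L"
    using exists_frac_eq_L[of "- t"] assms by (auto simp: loneliness_uminus)
  then have "t * real (v i) \<notin> \<int>" using L_pos by (auto simp: frac_neg)
  then show ?thesis using i by (auto simp: frac_neg)
qed

lemma lonely_time_eq_fraction:
  assumes "t \<in> lonely_times v k L"
  obtains a b m where "a \<in> {1..k}" "b \<in> {1..k}" "m < v a + v b" "t = real m / real (v a + v b)"
proof -
  have t: "0 \<le> t" "t < 1" "L \<le> loneliness v k t" using assms mem_lonely_times_iff by auto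
  obtain a where a: "a \<in> {1..k}" "frac (t * real (v a)) = L" using exists_frac_eq_L[OF t(3)] ..
  obtain b where b: "b \<in> {1..k}" "frac (t * real (v b)) = 1 - L"
    using exists_frac_eq_1_minus_L[OF t(3)] ..
  define N where "N = \<lfloor>t * real (v a)\<rfloor> + \<lfloor>t * real (v b)\<rfloor> + 1"
  have tN: "t * real (v a + v b) = of_int N"
    using a(2) b(2) unfolding N_def frac_def by (simp add: algebra_simps)
  have pos: "0 < real (v a + v b)" using speeds_pos[OF a(1)] by simp
  have "0 \<le> N" using tN t(1) pos by (metis of_int_0_le_iff zero_le_mult_iff of_nat_0_le_iff)
  moreover have "of_int N < real (v a + v b)" using tN mult_strict_right_mono[OF t(2) pos] by simp
  ultimately have "nat N < v a + v b" by linarith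
  moreover have "t = real (nat N) / real (v a + v b)" using tN pos \<open>0 \<le> N\<close> by (simp add: field_simps)
  ultimately show ?thesis using that a(1) b(1) by blast
qed

lemma finite_lonely_times: "finite (lonely_times v k L)"
proof (rule finite_subset)
  show "lonely_times v k L \<subseteq>
      (\<Union>a\<in>{1..k}. \<Union>b\<in>{1..k}. (\<lambda>m. real m / real (v a + v b)) ` {..< v a + v b})"
  proof
    fix t assume "t \<in> lonely_times v k L"
    then obtain a b m where "a \<in> {1..k}" "b \<in> {1..k}" "m < v a + v b"
      "t = real m / real (v a + v b)" by (rule lonely_time_eq_fraction)
    then show "t \<in> (\<Union>a\<in>{1..k}. \<Union>b\<in>{1..k}. (\<lambda>m. real m / real (v a + v b)) ` {..< v a + v b})"
      by blast
  qed
qed auto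

lemma lonely_time_mult_Ints:
  assumes "t \<in> lonely_times v k L" "times_lcm v k L dvd int w"
  shows "t * real w \<in> \<int>"
proof -
  obtain a b m where "t = real m / real (v a + v b)" by (rule lonely_time_eq_fraction[OF assms(1)])
  then have t: "t = of_rat (of_nat m / of_nat (v a + v b))" by (simp add: of_rat_divide of_rat_add)
  have "real_denom t dvd times_lcm v k L"
    unfolding times_lcm_def using assms(1) by (intro dvd_Lcm imageI)
  then have "real_denom t dvd int w" using assms(2) by (rule dvd_trans)
  then show ?thesis using mult_Ints_of_real_denom_dvd[of _ "int w"] t by simp
qed

text \<open>By compactness of \<open>[0, 1]\<close> with small open balls around the lonely times removed.\<close>

lemma loneliness_gap:
  assumes "0 < \<delta>"
  obtains \<eta> where "0 < \<eta>"
    "\<And>t. (\<And>y m. y \<in> lonely_times v k L \<Longrightarrow> \<delta> \<le> \<bar>t - (y + of_int m)\<bar>) \<Longrightarrow>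
      loneliness v k t \<le> L - \<eta>"
proof -
  define S where "S = lonely_times v k L \<union> (\<lambda>y. y + 1) ` lonely_times v k L"
  define K where "K = {0..1} - (\<Union>y\<in>S. ball y \<delta>)"
  have "compact K" unfolding K_def by (intro compact_diff compact_Icc open_UN) auto
  have below: "loneliness v k t < L" if "t \<in> K" for t
  proof (rule ccontr)
    assume "\<not> ?thesis"
    then have "frac t \<in> lonely_times v k L" by (simp add: frac_mem_lonely_times)
    moreover have "t = frac t \<or> t = frac t + 1"
      using that unfolding K_def by (cases "t < 1") (auto simp: frac_eq)
    ultimately have "t \<in> S" unfolding S_def by auto
    then show False using that assms unfolding K_def by force
  qed
  obtain \<eta> where \<eta>: "0 < \<eta>" "\<And>t. t \<in> K \<Longrightarrow> loneliness v k t \<le> L - \<eta>"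
  proof (cases "K = {}")
    case False
    then obtain z where "z \<in> K" "\<And>t. t \<in> K \<Longrightarrow> loneliness v k t \<le> loneliness v k z"
      using continuous_attains_sup[OF \<open>compact K\<close> False continuous_on_loneliness[OF k_ge_1]]
      by blast
    then show ?thesis using that[of "L - loneliness v k z"] below by fastforce
  qed (use that[of 1] in auto)
  show ?thesis
  proof (rule that[OF \<eta>(1)])
    fix t
    assume far: "\<And>y m. y \<in> lonely_times v k L \<Longrightarrow> \<delta> \<le> \<bar>t - (y + of_int m)\<bar>"
    have "frac t \<notin> ball y \<delta>" if "y \<in> S" for y
    proof -
      obtain y0 j where "y0 \<in> lonely_times v k L" "y = y0 + of_int j"
      proof (cases "y \<in> lonely_times v k L")
        case True
        then show ?thesis using that[of y 0] by simp
      next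
        case False
        then show ?thesis using \<open>y \<in> S\<close> that[of _ 1] unfolding S_def by auto
      qed
      then have "\<delta> \<le> \<bar>t - (y0 + of_int (j + \<lfloor>t\<rfloor>))\<bar>" using far by blast
      then show ?thesis using \<open>y = y0 + of_int j\<close> by (simp add: frac_def dist_real_def algebra_simps)
    qed
    then have "frac t \<in> K" unfolding K_def using frac_ge_0 frac_lt_1 less_imp_le by auto
    then show "loneliness v k t \<le> L - \<eta>" using \<eta>(2) loneliness_frac by metis
  qed
qed

lemma rho_idx_mem:
  assumes "t \<in> lonely_times v k L"
  shows "rho_idx v k L t \<in> {1..k}" "frac (t * real (v (rho_idx v k L t))) = L"
proof -
  have "{i\<in>{1..k}. frac (t * real (v i)) = L} \<noteq> {}"
    using assms exists_frac_eq_L[of t] unfolding mem_lonely_times_iff by force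
  from Max_in[OF _ this] show "rho_idx v k L t \<in> {1..k}" "frac (t * real (v (rho_idx v k L t))) = L"
    unfolding rho_idx_def by auto
qed

lemma lambda_idx_mem:
  assumes "t \<in> lonely_times v k L"
  shows "lambda_idx v k L t \<in> {1..k}" "frac (t * real (v (lambda_idx v k L t))) = 1 - L"
proof -
  have "{i\<in>{1..k}. frac (t * real (v i)) = 1 - L} \<noteq> {}"
    using assms exists_frac_eq_1_minus_L[of t] unfolding mem_lonely_times_iff by force
  from Max_in[OF _ this]
  show "lambda_idx v k L t \<in> {1..k}" "frac (t * real (v (lambda_idx v k L t))) = 1 - L"
    unfolding lambda_idx_def by auto
qed

lemma mu_idx_le:
  assumes "t \<in> lonely_times v k L"
  shows "mu_idx v k L \<le> rho_idx v k L t" "mu_idx v k L \<le> lambda_idx v k L t"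
  using Min_le[OF finite_imageI[OF finite_lonely_times],
      OF imageI[OF assms, of "\<lambda>t. min (rho_idx v k L t) (lambda_idx v k L t)"]]
  unfolding mu_idx_def by auto

lemma mu_idx_attained:
  obtains \<tau> where "\<tau> \<in> lonely_times v k L"
    "mu_idx v k L = rho_idx v k L \<tau> \<or> mu_idx v k L = lambda_idx v k L \<tau>"
proof -
  have "mu_idx v k L \<in> (\<lambda>t. min (rho_idx v k L t) (lambda_idx v k L t)) ` lonely_times v k L"
    unfolding mu_idx_def using finite_lonely_times lonely_times_nonempty by (intro Min_in) auto
  then show ?thesis using that by (auto simp: min_def)
qed

lemma mu_idx_mem: "mu_idx v k L \<in> {1..k}"
proof -
  obtain \<tau> where "\<tau> \<in> lonely_times v k L"
    "mu_idx v k L = rho_idx v k L \<tau> \<or> mu_idx v k L = lambda_idx v k L \<tau>"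
    by (rule mu_idx_attained)
  then show ?thesis using rho_idx_mem(1) lambda_idx_mem(1) by auto
qed

lemma eventually_loneliness_add_ge:
  assumes "L \<le> loneliness v k x" "0 \<le> V"
    and "\<And>i. i \<in> {1..k} \<Longrightarrow> frac (x * real (v i)) = 1 - L \<Longrightarrow> real (v i) \<le> V"
  shows "\<forall>\<^sub>F s in at_right 0. L - s * V \<le> loneliness v k (x + s)"
proof -
  have "\<forall>\<^sub>F s in at_right 0. \<forall>i\<in>{1..k}. L - s * V \<le> dist_int (x * real (v i) + s * real (v i))"
    using assms L_pos L_le_half
    by (intro eventually_ball_finite ballI eventually_dist_int_add_ge)
       (auto simp: loneliness_ge_iff[OF k_ge_1])
  then show ?thesis
    by eventually_elim (simp add: loneliness_ge_iff[OF k_ge_1] distrib_right)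
qed

lemma loneliness_extended_ge:
  assumes "0 < V" "x * real w \<in> \<int>"
    and lower: "L - L / (real w + V) * V \<le> loneliness v k (x + L / (real w + V))"
  shows "real w * L / (real w + V) \<le> loneliness (v(Suc k := w)) (Suc k) (x + L / (real w + V))"
proof -
  define s where "s = L / (real w + V)"
  have "0 \<le> s" using L_pos assms(1) by (simp add: s_def)
  have crossing: "real w * L / (real w + V) = L - s * V" "real w * L / (real w + V) = s * real w"
    unfolding s_def by (rule mult_divide_add_eq_diff[OF assms(1)], simp) simp
  obtain z where z: "x * real w = of_int z" using assms(2) by (rule Ints_cases)
  have "dist_int ((x + s) * real w) = dist_int (s * real w + of_int z)"
    using z by (simp add: distrib_right add.commute)
  also have "\<dots> = s * real w"
  proof -
    have "0 \<le> s * real w" "0 \<le> s * V" using \<open>0 \<le> s\<close> assms(1) by simp_all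
    then show ?thesis using crossing L_le_half by (simp add: dist_int_eq_self)
  qed
  finally show ?thesis
    using lower crossing by (simp add: loneliness_fun_upd_Suc[OF k_ge_1] s_def)
qed

end

locale increasing_lonely_speeds = lonely_speeds +
  assumes speeds_mono: "\<And>i j. i \<in> {1..k} \<Longrightarrow> j \<in> {1..k} \<Longrightarrow> i \<le> j \<Longrightarrow> v i \<le> v j"
begin

abbreviation v_mu :: real where "v_mu \<equiv> real (v (mu_idx v k L))"

lemma v_mu_pos: "0 < v_mu"
  using speeds_pos mu_idx_mem by simp

lemma speed_le_last: "i \<in> {1..k} \<Longrightarrow> v i \<le> v k"
  using speeds_mono k_ge_1 by auto

lemma speed_mu_le:
  assumes "t \<in> lonely_times v k L"
  shows "v (mu_idx v k L) \<le> v (rho_idx v k L t)" "v (mu_idx v k L) \<le> v (lambda_idx v k L t)"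
  using speeds_mono mu_idx_mem rho_idx_mem(1)[OF assms] lambda_idx_mem(1)[OF assms]
    mu_idx_le[OF assms] by auto

text \<open>Just after a lonely time the runner \<open>\<lambda>\<close> closes in from \<open>1 - L\<close>, just before it
  the runner \<open>\<rho>\<close> closes in from \<open>L\<close>; both are at least as fast as runner \<open>\<mu>\<close>.\<close>

lemma loneliness_near_lonely_time:
  assumes "y \<in> lonely_times v k L" "\<bar>\<sigma>\<bar> * real (v k) < L"
  shows "loneliness v k (y + \<sigma>) \<le> L - \<bar>\<sigma>\<bar> * v_mu"
proof (cases "0 \<le> \<sigma>")
  case True
  define i where "i = lambda_idx v k L y"
  have i: "i \<in> {1..k}" "frac (y * real (v i)) = 1 - L"
    using lambda_idx_mem[OF assms(1)] by (simp_all add: i_def)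
  have "\<sigma> * real (v i) \<le> \<sigma> * real (v k)"
    using True speed_le_last[OF i(1)] by (simp add: mult_left_mono)
  then have "dist_int (y * real (v i) + \<sigma> * real (v i)) = L - \<sigma> * real (v i)"
    using assms(2) True i(2) L_le_half by (intro dist_int_add_of_frac_eq_1_minus) auto
  moreover have "\<sigma> * v_mu \<le> \<sigma> * real (v i)"
    using True speed_mu_le(2)[OF assms(1)] by (simp add: i_def mult_left_mono)
  ultimately show ?thesis
    using loneliness_le[OF i(1), of v "y + \<sigma>"] True by (simp add: distrib_right)
next
  case False
  define b where "b = - \<sigma>"
  have b: "0 \<le> b" "\<bar>\<sigma>\<bar> = b" "y + \<sigma> = y - b" using False by (auto simp: b_def)
  define i where "i = rho_idx v k L y"
  have i: "i \<in> {1..k}" "frac (y * real (v i)) = L"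
    using rho_idx_mem[OF assms(1)] by (simp_all add: i_def)
  have "b * real (v i) \<le> b * real (v k)"
    using b(1) speed_le_last[OF i(1)] by (simp add: mult_left_mono)
  then have "dist_int (y * real (v i) - b * real (v i)) = L - b * real (v i)"
    using assms(2) b i(2) L_le_half by (intro dist_int_diff_of_frac_eq) auto
  moreover have "b * v_mu \<le> b * real (v i)"
    using b(1) speed_mu_le(1)[OF assms(1)] by (simp add: i_def mult_left_mono)
  ultimately show ?thesis
    using loneliness_le[OF i(1), of v "y - b"] b by (simp add: left_diff_distrib)
qed

lemma loneliness_extended_near_le:
  assumes "y \<in> lonely_times v k L" "\<bar>t - (y + of_int m)\<bar> * real (v k) < L"
    and "y * real w \<in> \<int>" "0 < real w"
  shows "loneliness (v(Suc k := w)) (Suc k) t \<le> real w * L / (real w + v_mu)"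
proof -
  define \<sigma> where "\<sigma> = t - (y + of_int m)"
  have "loneliness v k t = loneliness v k (y + \<sigma>)"
    using loneliness_add_of_int[of v k "y + \<sigma>" m] by (simp add: \<sigma>_def)
  also have "\<dots> \<le> L - \<bar>\<sigma>\<bar> * v_mu"
    using assms(2) by (intro loneliness_near_lonely_time[OF assms(1)]) (simp add: \<sigma>_def)
  finally have old_runners: "loneliness v k t \<le> L - \<bar>\<sigma>\<bar> * v_mu" .
  obtain z where z: "y * real w = of_int z" using assms(3) by (rule Ints_cases)
  have "t * real w - of_int (z + m * int w) = \<sigma> * real w"
    using z[symmetric] by (simp add: \<sigma>_def algebra_simps)
  then have new_runner: "dist_int (t * real w) \<le> \<bar>\<sigma>\<bar> * real w"
    using dist_int_le_abs_diff[of "t * real w" "z + m * int w"] by (simp add: abs_mult)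
  have "loneliness (v(Suc k := w)) (Suc k) t \<le> min (L - \<bar>\<sigma>\<bar> * v_mu) (\<bar>\<sigma>\<bar> * real w)"
    unfolding loneliness_fun_upd_Suc[OF k_ge_1] using old_runners new_runner by (rule min.mono)
  also have "\<dots> \<le> real w * L / (real w + v_mu)" using v_mu_pos assms(4) by (rule min_le_crossing)
  finally show ?thesis .
qed

lemma loneliness_extended_le:
  assumes gap: "\<And>t. (\<And>y m. y \<in> lonely_times v k L \<Longrightarrow> L / real (v k) \<le> \<bar>t - (y + of_int m)\<bar>) \<Longrightarrow>
      loneliness v k t \<le> L - \<eta>"
    and small: "L / (real w + v_mu) * v_mu \<le> \<eta>"
    and "0 < real w" "\<forall>y\<in>lonely_times v k L. y * real w \<in> \<int>"
  shows "loneliness (v(Suc k := w)) (Suc k) t \<le> real w * L / (real w + v_mu)"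
proof (cases "\<forall>y\<in>lonely_times v k L. \<forall>m::int. L / real (v k) \<le> \<bar>t - (y + of_int m)\<bar>")
  case True
  then have "loneliness v k t \<le> L - \<eta>" using gap by blast
  then show ?thesis
    using small mult_divide_add_eq_diff[OF v_mu_pos, of "real w" L]
    unfolding loneliness_fun_upd_Suc[OF k_ge_1] by simp
next
  case False
  then obtain y m where "y \<in> lonely_times v k L" "\<bar>t - (y + of_int m)\<bar> < L / real (v k)"
    by (auto simp: not_le)
  moreover have "0 < real (v k)" using speeds_pos k_ge_1 by simp
  ultimately show ?thesis
    using assms(3,4) by (intro loneliness_extended_near_le) (auto simp: pos_less_divide_eq)
qed

lemma eventually_loneliness_extended_le:
  "\<forall>\<^sub>F w in sequentially. (\<forall>y\<in>lonely_times v k L. y * real w \<in> \<int>) \<longrightarrow>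
     (\<forall>t. loneliness (v(Suc k := w)) (Suc k) t \<le> real w * L / (real w + v_mu))"
proof -
  have "0 < L / real (v k)" using L_pos speeds_pos k_ge_1 by simp
  obtain \<eta> where "0 < \<eta>" and gap:
    "\<And>t. (\<And>y m. y \<in> lonely_times v k L \<Longrightarrow> L / real (v k) \<le> \<bar>t - (y + of_int m)\<bar>) \<Longrightarrow>
      loneliness v k t \<le> L - \<eta>"
    using loneliness_gap[OF \<open>0 < L / real (v k)\<close>] by blast
  have "\<forall>\<^sub>F s in at_right 0. s * v_mu < \<eta>"
    using \<open>0 < \<eta>\<close> by (rule order_tendstoD(2)[OF tendsto_mult_right_at_right_0])
  then have "\<forall>\<^sub>F w in sequentially. L / (real w + v_mu) * v_mu < \<eta>"
    by (rule eventually_compose_filterlim[OF _ filterlim_divide_add_at_right_0[OF L_pos v_mu_pos]])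
  with eventually_gt_at_top[of 0] show ?thesis
    by eventually_elim (use loneliness_extended_le[OF gap] in \<open>auto intro: less_imp_le\<close>)
qed

text \<open>Reflecting \<open>t \<mapsto> -t\<close> swaps the roles of \<open>\<rho>\<close> and \<open>\<lambda>\<close>, so \<open>\<mu>\<close> may be taken
  to be a \<open>\<lambda>\<close>-index.\<close>

lemma lonely_witness_for_mu:
  obtains x where "x \<in> lonely_times v k L \<or> - x \<in> lonely_times v k L" "L \<le> loneliness v k x"
    "\<And>i. i \<in> {1..k} \<Longrightarrow> frac (x * real (v i)) = 1 - L \<Longrightarrow> v i \<le> v (mu_idx v k L)"
proof -
  obtain \<tau> where \<tau>: "\<tau> \<in> lonely_times v k L"
    "mu_idx v k L = rho_idx v k L \<tau> \<or> mu_idx v k L = lambda_idx v k L \<tau>"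
    by (rule mu_idx_attained)
  have \<tau>_lonely: "L \<le> loneliness v k \<tau>" using \<tau>(1) by (simp add: mem_lonely_times_iff)
  show ?thesis
  proof (cases "mu_idx v k L = lambda_idx v k L \<tau>")
    case True
    show ?thesis
    proof (rule that[of \<tau>])
      fix i assume "i \<in> {1..k}" "frac (\<tau> * real (v i)) = 1 - L"
      then show "v i \<le> v (mu_idx v k L)"
        using lambda_idx_ge[of i k \<tau> v L] True mu_idx_mem speeds_mono by auto
    qed (use \<tau> \<tau>_lonely in auto)
  next
    case False
    then have mu: "mu_idx v k L = rho_idx v k L \<tau>" using \<tau>(2) by auto
    show ?thesis
    proof (rule that[of "- \<tau>"])
      fix i assume i: "i \<in> {1..k}" "frac (- \<tau> * real (v i)) = 1 - L"
      have "frac (\<tau> * real (v i)) \<noteq> 0" using frac_bounds_if_lonely[OF \<tau>_lonely i(1)] L_pos by linarith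
      then have "frac (\<tau> * real (v i)) = L" using i(2) by (simp add: frac_neg)
      then show "v i \<le> v (mu_idx v k L)"
        using rho_idx_ge[of i k \<tau> v L] i(1) mu mu_idx_mem speeds_mono by auto
    qed (use \<tau> \<tau>_lonely in \<open>auto simp: loneliness_uminus\<close>)
  qed
qed

lemma eventually_loneliness_extended_ge:
  "\<forall>\<^sub>F w in sequentially. (\<forall>y\<in>lonely_times v k L. y * real w \<in> \<int>) \<longrightarrow>
     (\<exists>t. real w * L / (real w + v_mu) \<le> loneliness (v(Suc k := w)) (Suc k) t)"
proof -
  obtain x where x: "x \<in> lonely_times v k L \<or> - x \<in> lonely_times v k L" "L \<le> loneliness v k x"
    "\<And>i. i \<in> {1..k} \<Longrightarrow> frac (x * real (v i)) = 1 - L \<Longrightarrow> v i \<le> v (mu_idx v k L)"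
    using lonely_witness_for_mu by blast
  have "\<forall>\<^sub>F s in at_right 0. L - s * v_mu \<le> loneliness v k (x + s)"
    using x(2,3) v_mu_pos by (intro eventually_loneliness_add_ge) auto
  then have "\<forall>\<^sub>F w in sequentially.
      L - L / (real w + v_mu) * v_mu \<le> loneliness v k (x + L / (real w + v_mu))"
    by (rule eventually_compose_filterlim[OF _ filterlim_divide_add_at_right_0[OF L_pos v_mu_pos]])
  then show ?thesis
  proof (rule eventually_mono, intro impI)
    fix w assume lower: "L - L / (real w + v_mu) * v_mu \<le> loneliness v k (x + L / (real w + v_mu))"
      and "\<forall>y\<in>lonely_times v k L. y * real w \<in> \<int>"
    then have "x * real w \<in> \<int>" using x(1) by (metis Ints_minus minus_minus mult_minus_left)
    then show "\<exists>t. real w * L / (real w + v_mu) \<le> loneliness (v(Suc k := w)) (Suc k) t"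
      using loneliness_extended_ge[OF v_mu_pos _ lower] by blast
  qed
qed

lemma eventually_max_lonely_extended:
  "\<forall>\<^sub>F w in sequentially. times_lcm v k L dvd int w \<longrightarrow>
     max_lonely (v(Suc k := w)) (Suc k) = real w * L / (real w + v_mu)"
  using eventually_conj[OF eventually_loneliness_extended_le eventually_loneliness_extended_ge]
proof eventually_elim
  case (elim w)
  show ?case
  proof
    assume "times_lcm v k L dvd int w"
    then have "\<forall>y\<in>lonely_times v k L. y * real w \<in> \<int>" using lonely_time_mult_Ints by blast
    then obtain t0 where le: "\<And>t. loneliness (v(Suc k := w)) (Suc k) t \<le> real w * L / (real w + v_mu)"
      and ge: "real w * L / (real w + v_mu) \<le> loneliness (v(Suc k := w)) (Suc k) t0"
      using elim by blast
    have "real w * L / (real w + v_mu) \<in> range (loneliness (v(Suc k := w)) (Suc k))"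
      using antisym[OF le ge] by (metis rangeI)
    then show "max_lonely (v(Suc k := w)) (Suc k) = real w * L / (real w + v_mu)"
      unfolding max_lonely_eq_SUP_loneliness using le by (intro cSup_eq_maximum) auto
  qed
qed

end

theorem lemma9p4:
  fixes n :: nat and v :: "nat \<Rightarrow> nat" and L :: real
  assumes "n \<ge> 2"
    and "\<forall>i\<in>{1..n-1}. 0 < v i"
    and "\<forall>i\<in>{1..n-1}. \<forall>j\<in>{1..n-1}. i < j \<longrightarrow> v i < v j"
    and "max_lonely v (n - 1) = L"
  shows "\<exists>C::nat. \<forall>vn::nat. vn \<ge> C \<and> times_lcm v (n - 1) L dvd int vn \<longrightarrow>
           max_lonely (v(n := vn)) n
             = real vn * L / (real vn + real (v (mu_idx v (n - 1) L)))"
proof -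
  define k where "k = n - 1"
  have n: "Suc k = n" using assms(1) by (simp add: k_def)
  interpret increasing_lonely_speeds v k L
  proof
    show "v i \<le> v j" if "i \<in> {1..k}" "j \<in> {1..k}" "i \<le> j" for i j
    proof (cases "i = j")
      case False
      then have "i < j" using that(3) by simp
      then show ?thesis using assms(3) that(1,2) unfolding k_def by (auto intro: less_imp_le)
    qed simp
  qed (use assms in \<open>auto simp: k_def\<close>)
  obtain C where "\<forall>w\<ge>C. times_lcm v k L dvd int w \<longrightarrow>
      max_lonely (v(Suc k := w)) (Suc k) = real w * L / (real w + real (v (mu_idx v k L)))"
    using eventually_max_lonely_extended unfolding eventually_sequentially by blast
  then show ?thesis unfolding n k_def[symmetric] by blast
qed

end
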